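(* Let $(S,\cdot)$ be a discrete semigroup, let $\mathcal{F}$ be a filter on $S$ such that $\overline{\mathcal{F}}$ is a subsemigroup of $\beta S$, let $(X,\langle T_s\rangle_{s\in S})$ be a dynamical system, let $L$ be a minimal left ideal of $\overline{\mathcal{F}}$, and let $x\in X$. The following are equivalent: (a) $x$ is an $\mathcal{F}$-uniformly recurrent point of $(X,\langle T_s\rangle_{s\in S})$; (b) there exists $u\in L$ such that $T_u(x)=x$; (c) there exist $y\in X$ and an idempotent $u\in L$ such that $T_u(y)=x$; (d) there exists an idempotent $u\in L$ such that $T_u(x)=x$.
   Context: $\beta S$ is the Stone–Čech compactification of $S$ (ultrafilters on $S$) with the extended operation making it a compact right topological semigroup ($A\in pq$ iff $\{x\in S:x^{-1}A\in q\}\in p$, where $x^{-1}A=\{y: xy\in A\}$). $\overline{\mathcal{F}}=\bigcap_{F\in\mathcal{F}}\overline{F}$ is the set of ultrafilters containing $\mathcal{F}$. A dynamical system $(X,\langle T_s\rangle_{s\in S})$: $X$ compact Hausdorff, each $T_s$ continuous, $T_s\circ T_t=T_{st}$. For $p\in\beta S$, $T_p(x)=p\text{-}\lim_{s\in S}T_s(x)$; one has $T_p\circ T_q=T_{pq}$. A set $A\subseteq S$ is $\mathcal{F}$-syndetic if for every $F\in\mathcal{F}$ there is a finite $G\subseteq F$ with $\bigcup_{t\in G}t^{-1}A\in\mathcal{F}$. A point $x$ is $\mathcal{F}$-uniformly recurrent if for every neighbourhood $U$ of $x$, $\{s\in S:T_s(x)\in U\}$ is $\mathcal{F}$-syndetic.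 *)

theory Defs
  imports "HOL-Analysis.Analysis"
begin

definition is_ultrafilter :: "'s set set \<Rightarrow> bool" where
  "is_ultrafilter p \<longleftrightarrow> UNIV \<in> p \<and> {} \<notin> p
     \<and> (\<forall>A B. A \<in> p \<and> A \<subseteq> B \<longrightarrow> B \<in> p)
     \<and> (\<forall>A B. A \<in> p \<and> B \<in> p \<longrightarrow> A \<inter> B \<in> p)
     \<and> (\<forall>A. A \<in> p \<or> - A \<in> p)"

definition betaS :: "'s set set set" where
  "betaS = {p. is_ultrafilter p}"

definition linv :: "'s::semigroup_mult \<Rightarrow> 's set \<Rightarrow> 's set" where
  "linv x A = {y. x * y \<in> A}"

definition uprod :: "'s::semigroup_mult set set \<Rightarrow> 's set set \<Rightarrow> 's set set" where
  "uprod p q = {A. {x. linv x A \<in> q} \<in> p}"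

definition Fbar :: "'s filter \<Rightarrow> 's set set set" where
  "Fbar F = {p \<in> betaS. \<forall>A. eventually (\<lambda>s. s \<in> A) F \<longrightarrow> A \<in> p}"

definition subsemigroup :: "'s::semigroup_mult set set set \<Rightarrow> bool" where
  "subsemigroup M \<longleftrightarrow> M \<noteq> {} \<and> (\<forall>p\<in>M. \<forall>q\<in>M. uprod p q \<in> M)"

definition left_ideal :: "'s::semigroup_mult set set set \<Rightarrow> 's set set set \<Rightarrow> bool" where
  "left_ideal M L \<longleftrightarrow> L \<noteq> {} \<and> L \<subseteq> M \<and> (\<forall>q\<in>M. \<forall>p\<in>L. uprod q p \<in> L)"

definition minimal_left_ideal :: "'s::semigroup_mult set set set \<Rightarrow> 's set set set \<Rightarrow> bool" where
  "minimal_left_ideal M L \<longleftrightarrow> left_ideal M L \<and> (\<forall>L'. left_ideal M L' \<and> L' \<subseteq> L \<longrightarrow> L' = L)"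

definition dyn_system :: "('s::semigroup_mult \<Rightarrow> 'x::t2_space \<Rightarrow> 'x) \<Rightarrow> bool" where
  "dyn_system T \<longleftrightarrow> compact (UNIV :: 'x set) \<and> (\<forall>s. continuous_on UNIV (T s))
     \<and> (\<forall>s t. T s \<circ> T t = T (s * t))"

definition Tp :: "('s \<Rightarrow> 'x::topological_space \<Rightarrow> 'x) \<Rightarrow> 's set set \<Rightarrow> 'x \<Rightarrow> 'x" where
  "Tp T p x = (THE y. \<forall>U. open U \<and> y \<in> U \<longrightarrow> {s. T s x \<in> U} \<in> p)"

definition F_syndetic :: "'s filter \<Rightarrow> 's::semigroup_mult set \<Rightarrow> bool" where
  "F_syndetic F A \<longleftrightarrow> (\<forall>B. eventually (\<lambda>s. s \<in> B) F \<longrightarrow>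
      (\<exists>G. finite G \<and> G \<subseteq> B \<and> eventually (\<lambda>s. s \<in> (\<Union>t\<in>G. linv t A)) F))"

definition F_unif_recurrent :: "'s filter \<Rightarrow> ('s::semigroup_mult \<Rightarrow> 'x::topological_space \<Rightarrow> 'x) \<Rightarrow> 'x \<Rightarrow> bool" where
  "F_unif_recurrent F T x \<longleftrightarrow> (\<forall>U. open U \<and> x \<in> U \<longrightarrow> F_syndetic F {s. T s x \<in> U})"

end

theory Submission
  imports Defs
begin

text \<open>
  Compactness of \<open>betaS\<close> enters only through the ultrafilter lemma. The key translation is that
  \<open>A\<close> is \<open>F\<close>-syndetic iff for every \<open>p \<in> Fbar F\<close> the set \<open>{t. t\<^sup>-\<^sup>1A \<in> p}\<close> meets every
  member of \<open>F\<close>.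

  (a) \<open>\<Longrightarrow>\<close> (b): for \<open>v \<in> L\<close> the sets \<open>{t. t\<^sup>-\<^sup>1{s. T\<^sub>s x \<in> U} \<in> v}\<close>, \<open>U\<close> a neighbourhood of \<open>x\<close>,
  together with \<open>F\<close> generate some \<open>q \<in> Fbar F\<close>; then \<open>T\<^sub>q\<^sub>v x = x\<close> and \<open>q v \<in> L\<close>.
  (b) \<open>\<Longrightarrow>\<close> (a): given \<open>p \<in> Fbar F\<close>, minimality of \<open>L\<close> yields \<open>q\<close> with \<open>q p u = u\<close>, so \<open>q p\<close> fixes \<open>x\<close>
  and every return set of \<open>x\<close> lies in \<open>q p\<close>.
  (b) \<open>\<Longrightarrow>\<close> (d): \<open>L = Fbar F \<cdot> u\<close> is closed, so by the Ellis-Numakura lemma the closed semigroup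
  \<open>{e \<in> L. e u = u}\<close> contains an idempotent, which fixes \<open>x = T\<^sub>u x\<close>.
  (c) \<open>\<Longrightarrow>\<close> (d) because \<open>T\<^sub>u (T\<^sub>u y) = T\<^sub>u\<^sub>u y\<close>.
\<close>

section \<open>Ultrafilters\<close>

lemma mem_betaS [simp]: "p \<in> betaS \<longleftrightarrow> is_ultrafilter p"
  by (simp add: betaS_def)

definition proper_filter :: "'a set set \<Rightarrow> bool" where
  "proper_filter P \<longleftrightarrow> UNIV \<in> P \<and> {} \<notin> P
     \<and> (\<forall>A B. A \<in> P \<and> A \<subseteq> B \<longrightarrow> B \<in> P)
     \<and> (\<forall>A B. A \<in> P \<and> B \<in> P \<longrightarrow> A \<inter> B \<in> P)"

lemma is_ultrafilter_iff: "is_ultrafilter p \<longleftrightarrow> proper_filter p \<and> (\<forall>A. A \<in> p \<or> - A \<in> p)"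
  unfolding is_ultrafilter_def proper_filter_def by blast

lemma ultrafilter_mono: "is_ultrafilter p \<Longrightarrow> A \<in> p \<Longrightarrow> A \<subseteq> B \<Longrightarrow> B \<in> p"
  unfolding is_ultrafilter_def by blast

lemma ultrafilter_UNIV: "is_ultrafilter p \<Longrightarrow> UNIV \<in> p"
  unfolding is_ultrafilter_def by blast

lemma ultrafilter_empty: "is_ultrafilter p \<Longrightarrow> {} \<notin> p"
  unfolding is_ultrafilter_def by blast

lemma ultrafilter_Int_iff: "is_ultrafilter p \<Longrightarrow> A \<inter> B \<in> p \<longleftrightarrow> A \<in> p \<and> B \<in> p"
  unfolding is_ultrafilter_def by (meson inf_le1 inf_le2)

lemma ultrafilter_Compl_iff: "is_ultrafilter p \<Longrightarrow> - A \<in> p \<longleftrightarrow> A \<notin> p"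
  unfolding is_ultrafilter_def by (metis Compl_disjoint2)

lemma ultrafilter_disjoint: "is_ultrafilter p \<Longrightarrow> A \<in> p \<Longrightarrow> B \<in> p \<Longrightarrow> A \<inter> B \<noteq> {}"
  by (metis ultrafilter_Int_iff ultrafilter_empty)

lemma ultrafilter_Un_iff: "is_ultrafilter p \<Longrightarrow> A \<union> B \<in> p \<longleftrightarrow> A \<in> p \<or> B \<in> p"
  using ultrafilter_Int_iff[of p "- A" "- B"] ultrafilter_Compl_iff[of p] by (metis compl_sup)

lemma ultrafilter_finite_UN:
  assumes "finite G" "is_ultrafilter p" "(\<Union>t\<in>G. f t) \<in> p"
  shows "\<exists>t\<in>G. f t \<in> p"
  using assms by (induction G rule: finite_induct) (auto simp: ultrafilter_empty ultrafilter_Un_iff)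

lemma ultrafilter_subset_eq:
  assumes p: "is_ultrafilter p" and q: "is_ultrafilter q" and "p \<subseteq> q"
  shows "p = q"
proof
  show "q \<subseteq> p"
    using assms ultrafilter_Compl_iff ultrafilter_disjoint by (metis Compl_disjoint subsetI subsetD)
qed fact

definition filter_base :: "'a set set \<Rightarrow> bool" where
  "filter_base \<A> \<longleftrightarrow> \<A> \<noteq> {} \<and> {} \<notin> \<A> \<and> (\<forall>A\<in>\<A>. \<forall>B\<in>\<A>. A \<inter> B \<in> \<A>)"

lemma proper_filter_upward_closure:
  assumes "filter_base \<A>"
  shows "proper_filter {B. \<exists>A\<in>\<A>. A \<subseteq> B}"
  unfolding proper_filter_def
proof (intro conjI allI impI)
  show "UNIV \<in> {B. \<exists>A\<in>\<A>. A \<subseteq> B}" "{} \<notin> {B. \<exists>A\<in>\<A>. A \<subseteq> B}"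
    using assms unfolding filter_base_def by (auto simp: subset_empty)
  show "B \<in> {B. \<exists>A\<in>\<A>. A \<subseteq> B}" if "A \<in> {B. \<exists>A\<in>\<A>. A \<subseteq> B} \<and> A \<subseteq> B" for A B
    using that by blast
  show "A \<inter> B \<in> {B. \<exists>A\<in>\<A>. A \<subseteq> B}"
    if AB: "A \<in> {B. \<exists>A\<in>\<A>. A \<subseteq> B} \<and> B \<in> {B. \<exists>A\<in>\<A>. A \<subseteq> B}" for A B
  proof -
    obtain A' B' where "A' \<in> \<A>" "B' \<in> \<A>" "A' \<subseteq> A" "B' \<subseteq> B"
      using AB by blast
    moreover from this have "A' \<inter> B' \<in> \<A>"
      using assms unfolding filter_base_def by blast
    ultimately show ?thesis
      by blast
  qed
qed

lemma proper_filter_chain_Union: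
  assumes "\<C> \<noteq> {}" and filters: "\<And>P. P \<in> \<C> \<Longrightarrow> proper_filter P"
    and chain: "\<And>P Q. P \<in> \<C> \<Longrightarrow> Q \<in> \<C> \<Longrightarrow> P \<subseteq> Q \<or> Q \<subseteq> P"
  shows "proper_filter (\<Union>\<C>)"
  unfolding proper_filter_def
proof (intro conjI allI impI)
  show "UNIV \<in> \<Union>\<C>"
    using \<open>\<C> \<noteq> {}\<close> filters unfolding proper_filter_def by blast
  show "{} \<notin> \<Union>\<C>"
    using filters unfolding proper_filter_def by blast
  show "B \<in> \<Union>\<C>" if "A \<in> \<Union>\<C> \<and> A \<subseteq> B" for A B
    using that filters unfolding proper_filter_def by blast
  show "A \<inter> B \<in> \<Union>\<C>" if AB: "A \<in> \<Union>\<C> \<and> B \<in> \<Union>\<C>" for A B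
  proof -
    obtain P Q where "P \<in> \<C>" "Q \<in> \<C>" "A \<in> P" "B \<in> Q"
      using AB by blast
    with chain[of P Q] filters[of P] filters[of Q] have "A \<inter> B \<in> P \<or> A \<inter> B \<in> Q"
      unfolding proper_filter_def by (metis subsetD)
    with \<open>P \<in> \<C>\<close> \<open>Q \<in> \<C>\<close> show ?thesis
      by blast
  qed
qed

lemma maximal_proper_filter_is_ultrafilter:
  assumes P: "proper_filter P" and max: "\<And>Q. proper_filter Q \<Longrightarrow> P \<subseteq> Q \<Longrightarrow> Q = P"
  shows "is_ultrafilter P"
  unfolding is_ultrafilter_iff
proof (intro conjI allI P)
  fix A
  show "A \<in> P \<or> - A \<in> P"
  proof (cases "\<exists>C\<in>P. C \<inter> A = {}")
    case True
    then obtain C where "C \<in> P" "C \<subseteq> - A"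
      by blast
    then show ?thesis
      using P unfolding proper_filter_def by blast
  next
    case False
    \<comment> \<open>Then the traces \<open>C \<inter> A\<close> of \<open>P\<close> generate a proper filter extending \<open>P\<close> and containing \<open>A\<close>.\<close>
    let ?Q = "{B. \<exists>C\<in>{C \<inter> A | C. C \<in> P}. C \<subseteq> B}"
    have "filter_base {C \<inter> A | C. C \<in> P}"
      unfolding filter_base_def
    proof (intro conjI ballI)
      have "UNIV \<in> P"
        using P unfolding proper_filter_def by blast
      then show "{C \<inter> A | C. C \<in> P} \<noteq> {}"
        by blast
      show "{} \<notin> {C \<inter> A | C. C \<in> P}"
        using False by blast
      fix B B' assume "B \<in> {C \<inter> A | C. C \<in> P}" "B' \<in> {C \<inter> A | C. C \<in> P}"
      then obtain C C' where "C \<in> P" "C' \<in> P" "B = C \<inter> A" "B' = C' \<inter> A"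
        by blast
      moreover from this have "C \<inter> C' \<in> P"
        using P unfolding proper_filter_def by blast
      moreover have "B \<inter> B' = (C \<inter> C') \<inter> A"
        using calculation by blast
      ultimately show "B \<inter> B' \<in> {C \<inter> A | C. C \<in> P}"
        by blast
    qed
    then have "proper_filter ?Q"
      by (rule proper_filter_upward_closure)
    moreover have "P \<subseteq> ?Q"
      by blast
    ultimately have "?Q = P"
      by (rule max)
    moreover have "A \<in> ?Q"
      using P unfolding proper_filter_def by blast
    ultimately show ?thesis
      by blast
  qed
qed

lemma ultrafilter_extends_proper_filter:
  assumes "proper_filter P"
  obtains p where "is_ultrafilter p" "P \<subseteq> p"
proof -
  let ?\<P> = "{Q. proper_filter Q \<and> P \<subseteq> Q}"
  have "\<exists>M\<in>?\<P>. \<forall>Q\<in>?\<P>. M \<subseteq> Q \<longrightarrow> Q = M"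
  proof (rule subset_Zorn_nonempty)
    fix \<C> assume "\<C> \<noteq> {}" and chain: "subset.chain ?\<P> \<C>"
    then have "proper_filter (\<Union>\<C>)"
      by (intro proper_filter_chain_Union) (auto simp: subset_chain_def)
    then show "\<Union>\<C> \<in> ?\<P>"
      using \<open>\<C> \<noteq> {}\<close> chain unfolding subset_chain_def by blast
  next
    show "?\<P> \<noteq> {}"
      using assms by auto
  qed
  then obtain M where M: "proper_filter M" "P \<subseteq> M" and maximal: "\<forall>Q\<in>?\<P>. M \<subseteq> Q \<longrightarrow> Q = M"
    by blast
  have max: "Q = M" if "proper_filter Q" "M \<subseteq> Q" for Q
    using maximal that M(2) by blast
  show thesis
    using maximal_proper_filter_is_ultrafilter[OF M(1) max] M(2) by (rule that)
qed

lemma ultrafilter_extends_filter_base: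
  assumes "filter_base \<A>"
  obtains p where "is_ultrafilter p" "\<A> \<subseteq> p"
proof -
  obtain p where "is_ultrafilter p" "{B. \<exists>A\<in>\<A>. A \<subseteq> B} \<subseteq> p"
    using ultrafilter_extends_proper_filter[OF proper_filter_upward_closure[OF assms]] .
  moreover have "\<A> \<subseteq> {B. \<exists>A\<in>\<A>. A \<subseteq> B}"
    by blast
  ultimately show thesis
    by (meson that order_trans)
qed

lemma ultrafilter_extends_meeting_families:
  assumes "P \<noteq> {}" and P_Int: "\<And>A B. A \<in> P \<Longrightarrow> B \<in> P \<Longrightarrow> A \<inter> B \<in> P"
    and "\<G> \<noteq> {}" and G_Int: "\<And>A B. A \<in> \<G> \<Longrightarrow> B \<in> \<G> \<Longrightarrow> A \<inter> B \<in> \<G>"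
    and meets: "\<And>A B. A \<in> P \<Longrightarrow> B \<in> \<G> \<Longrightarrow> A \<inter> B \<noteq> {}"
  obtains q where "is_ultrafilter q" "P \<subseteq> q" "\<G> \<subseteq> q"
proof -
  obtain A\<^sub>0 B\<^sub>0 where A\<^sub>0: "A\<^sub>0 \<in> P" and B\<^sub>0: "B\<^sub>0 \<in> \<G>"
    using \<open>P \<noteq> {}\<close> \<open>\<G> \<noteq> {}\<close> by blast
  have "filter_base {A \<inter> B | A B. A \<in> P \<and> B \<in> \<G>}"
    unfolding filter_base_def
  proof (intro conjI ballI)
    show "{A \<inter> B | A B. A \<in> P \<and> B \<in> \<G>} \<noteq> {}"
      using A\<^sub>0 B\<^sub>0 by blast
    show "{} \<notin> {A \<inter> B | A B. A \<in> P \<and> B \<in> \<G>}"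
      using meets by blast
    fix X Y assume "X \<in> {A \<inter> B | A B. A \<in> P \<and> B \<in> \<G>}" "Y \<in> {A \<inter> B | A B. A \<in> P \<and> B \<in> \<G>}"
    then obtain A B A' B' where "X = A \<inter> B" "Y = A' \<inter> B'" "A \<in> P" "A' \<in> P" "B \<in> \<G>" "B' \<in> \<G>"
      by blast
    moreover from this have "A \<inter> A' \<in> P" "B \<inter> B' \<in> \<G>"
      by (simp_all add: P_Int G_Int)
    moreover have "X \<inter> Y = (A \<inter> A') \<inter> (B \<inter> B')"
      using calculation by blast
    ultimately show "X \<inter> Y \<in> {A \<inter> B | A B. A \<in> P \<and> B \<in> \<G>}"
      by blast
  qed
  then obtain q where q: "is_ultrafilter q" "{A \<inter> B | A B. A \<in> P \<and> B \<in> \<G>} \<subseteq> q"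
    by (rule ultrafilter_extends_filter_base)
  have "A \<in> q" if "A \<in> P" for A
    using q that B\<^sub>0 ultrafilter_mono[OF q(1), of "A \<inter> B\<^sub>0" A] by blast
  moreover have "B \<in> q" if "B \<in> \<G>" for B
    using q that A\<^sub>0 ultrafilter_mono[OF q(1), of "A\<^sub>0 \<inter> B" B] by blast
  ultimately show thesis
    using q(1) that by blast
qed

section \<open>The semigroup \<open>betaS\<close>\<close>

lemma linv_Int: "linv x (A \<inter> B) = linv x A \<inter> linv x B"
  by (auto simp: linv_def)

lemma linv_Compl: "linv x (- A) = - linv x A"
  by (auto simp: linv_def)

lemma linv_mono: "A \<subseteq> B \<Longrightarrow> linv x A \<subseteq> linv x B"
  by (auto simp: linv_def)

lemma linv_UNIV [simp]: "linv x UNIV = UNIV"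
  by (simp add: linv_def)

lemma linv_empty [simp]: "linv x {} = {}"
  by (simp add: linv_def)

lemma mem_uprod: "A \<in> uprod p q \<longleftrightarrow> {x. linv x A \<in> q} \<in> p"
  by (simp add: uprod_def)

lemma uprod_assoc: "uprod (uprod p q) r = uprod p (uprod q r)"
proof -
  have "linv y {x. linv x A \<in> r} = {x. linv x (linv y A) \<in> r}" for y A
    by (simp add: linv_def mult.assoc)
  then show ?thesis
    by (simp add: uprod_def)
qed

lemma ultrafilter_uprod:
  assumes p: "is_ultrafilter p" and q: "is_ultrafilter q"
  shows "is_ultrafilter (uprod p q)"
proof -
  define D where "D A = {x. linv x A \<in> q}" for A
  have mem: "A \<in> uprod p q \<longleftrightarrow> D A \<in> p" for A
    by (simp add: D_def mem_uprod)
  have D_UNIV: "D UNIV = UNIV" and D_empty: "D {} = {}"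
    using q by (simp_all add: D_def ultrafilter_UNIV ultrafilter_empty)
  have D_mono: "D A \<subseteq> D B" if "A \<subseteq> B" for A B
    using q linv_mono[OF that] ultrafilter_mono unfolding D_def by blast
  have D_Int: "D (A \<inter> B) = D A \<inter> D B" and D_Compl: "D (- A) = - D A" for A B
    using q by (auto simp: D_def linv_Int linv_Compl ultrafilter_Int_iff ultrafilter_Compl_iff)
  show ?thesis
    unfolding is_ultrafilter_def mem
  proof (intro conjI allI impI)
    show "D UNIV \<in> p" "D {} \<notin> p"
      using p by (simp_all add: D_UNIV D_empty ultrafilter_UNIV ultrafilter_empty)
    show "D B \<in> p" if "D A \<in> p \<and> A \<subseteq> B" for A B
      using that ultrafilter_mono[OF p _ D_mono[of A B]] by blast
    show "D (A \<inter> B) \<in> p" if "D A \<in> p \<and> D B \<in> p" for A B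
      using that p by (simp add: D_Int ultrafilter_Int_iff)
    show "D A \<in> p \<or> D (- A) \<in> p" for A
      using p by (simp add: D_Compl ultrafilter_Compl_iff)
  qed
qed

section \<open>Closed subsets of \<open>betaS\<close>\<close>

lemma Fbar_ultrafilter: "p \<in> Fbar F \<Longrightarrow> is_ultrafilter p"
  unfolding Fbar_def by simp

lemma FbarD: "p \<in> Fbar F \<Longrightarrow> eventually (\<lambda>s. s \<in> A) F \<Longrightarrow> A \<in> p"
  unfolding Fbar_def by blast

lemma FbarI: "is_ultrafilter p \<Longrightarrow> (\<And>A. eventually (\<lambda>s. s \<in> A) F \<Longrightarrow> A \<in> p) \<Longrightarrow> p \<in> Fbar F"
  unfolding Fbar_def by simp

text \<open>A subset of \<open>betaS\<close> is closed in the Stone topology iff it contains every ultrafilter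
  that contains all sets common to its members.\<close>
definition beta_closed :: "'s set set set \<Rightarrow> bool" where
  "beta_closed K \<longleftrightarrow> K \<subseteq> betaS \<and> (\<forall>p\<in>betaS. \<Inter>K \<subseteq> p \<longrightarrow> p \<in> K)"

lemma beta_closedI:
  "(\<And>p. p \<in> K \<Longrightarrow> is_ultrafilter p) \<Longrightarrow> (\<And>p. is_ultrafilter p \<Longrightarrow> \<Inter>K \<subseteq> p \<Longrightarrow> p \<in> K)
    \<Longrightarrow> beta_closed K"
  unfolding beta_closed_def by auto

lemma beta_closedD: "beta_closed K \<Longrightarrow> is_ultrafilter p \<Longrightarrow> \<Inter>K \<subseteq> p \<Longrightarrow> p \<in> K"
  unfolding beta_closed_def by simp

lemma beta_closed_ultrafilter: "beta_closed K \<Longrightarrow> p \<in> K \<Longrightarrow> is_ultrafilter p"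
  unfolding beta_closed_def by auto

lemma beta_closed_Fbar: "beta_closed (Fbar F)"
proof (rule beta_closedI)
  fix p assume p: "is_ultrafilter p" and "\<Inter>(Fbar F) \<subseteq> p"
  moreover have "A \<in> \<Inter>(Fbar F)" if "eventually (\<lambda>s. s \<in> A) F" for A
    using that FbarD by blast
  ultimately have "A \<in> p" if "eventually (\<lambda>s. s \<in> A) F" for A
    using that by blast
  with p show "p \<in> Fbar F"
    by (rule FbarI)
qed (rule Fbar_ultrafilter)

lemma beta_closed_Inter:
  assumes "\<K> \<noteq> {}" and closed: "\<And>K. K \<in> \<K> \<Longrightarrow> beta_closed K"
  shows "beta_closed (\<Inter>\<K>)"
proof (rule beta_closedI)
  fix p assume p: "is_ultrafilter p" "\<Inter>(\<Inter>\<K>) \<subseteq> p"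
  have "p \<in> K" if "K \<in> \<K>" for K
  proof (rule beta_closedD[OF closed[OF that] p(1)])
    have "\<Inter>K \<subseteq> \<Inter>(\<Inter>\<K>)"
      using that by (intro Inter_anti_mono) blast
    then show "\<Inter>K \<subseteq> p"
      using p(2) by (rule order_trans)
  qed
  then show "p \<in> \<Inter>\<K>"
    by blast
next
  fix p assume "p \<in> \<Inter>\<K>"
  moreover obtain K where "K \<in> \<K>"
    using \<open>\<K> \<noteq> {}\<close> by blast
  ultimately show "is_ultrafilter p"
    using beta_closed_ultrafilter[OF closed] by blast
qed

lemma Inter_ultrafilters:
  assumes "\<And>r. r \<in> K \<Longrightarrow> is_ultrafilter r"
  shows "UNIV \<in> \<Inter>K" and "A \<in> \<Inter>K \<Longrightarrow> B \<in> \<Inter>K \<Longrightarrow> A \<inter> B \<in> \<Inter>K"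
  using assms ultrafilter_UNIV ultrafilter_Int_iff by blast+

lemma beta_closed_chain_Inter_nonempty:
  assumes "\<K> \<noteq> {}" and closed: "\<And>K. K \<in> \<K> \<Longrightarrow> beta_closed K" and nonempty: "\<And>K. K \<in> \<K> \<Longrightarrow> K \<noteq> {}"
    and chain: "\<And>K K'. K \<in> \<K> \<Longrightarrow> K' \<in> \<K> \<Longrightarrow> K \<subseteq> K' \<or> K' \<subseteq> K"
  shows "\<Inter>\<K> \<noteq> {}"
proof -
  have ultra: "is_ultrafilter r" if "K \<in> \<K>" "r \<in> K" for K r
    using closed[OF that(1)] that(2) by (rule beta_closed_ultrafilter)
  have "filter_base (\<Union>K\<in>\<K>. \<Inter>K)"
    unfolding filter_base_def
  proof (intro conjI ballI)
    obtain K where "K \<in> \<K>"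
      using \<open>\<K> \<noteq> {}\<close> by blast
    then have "UNIV \<in> \<Inter>K"
      using Inter_ultrafilters(1) ultra by blast
    with \<open>K \<in> \<K>\<close> show "(\<Union>K\<in>\<K>. \<Inter>K) \<noteq> {}"
      by blast
    show "{} \<notin> (\<Union>K\<in>\<K>. \<Inter>K)"
    proof
      assume "{} \<in> (\<Union>K\<in>\<K>. \<Inter>K)"
      then obtain K where "K \<in> \<K>" "{} \<in> \<Inter>K"
        by blast
      moreover from this obtain r where "r \<in> K"
        using nonempty by blast
      ultimately show False
        using ultra ultrafilter_empty by blast
    qed
    fix A B assume "A \<in> (\<Union>K\<in>\<K>. \<Inter>K)" "B \<in> (\<Union>K\<in>\<K>. \<Inter>K)"
    then obtain K K' where K: "K \<in> \<K>" "K' \<in> \<K>" "A \<in> \<Inter>K" "B \<in> \<Inter>K'"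
      by blast
    have "\<exists>K\<^sub>0\<in>\<K>. A \<in> \<Inter>K\<^sub>0 \<and> B \<in> \<Inter>K\<^sub>0"
    proof (cases "K \<subseteq> K'")
      case True
      then show ?thesis
        using K by blast
    next
      case False
      then have "K' \<subseteq> K"
        using chain[OF K(1,2)] by blast
      then show ?thesis
        using K by blast
    qed
    then obtain K\<^sub>0 where "K\<^sub>0 \<in> \<K>" "A \<in> \<Inter>K\<^sub>0" "B \<in> \<Inter>K\<^sub>0"
      by blast
    moreover from this have "A \<inter> B \<in> \<Inter>K\<^sub>0"
      using Inter_ultrafilters(2)[of K\<^sub>0 A B] ultra by blast
    ultimately show "A \<inter> B \<in> (\<Union>K\<in>\<K>. \<Inter>K)"
      by blast
  qed
  then obtain p where p: "is_ultrafilter p" "(\<Union>K\<in>\<K>. \<Inter>K) \<subseteq> p"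
    by (rule ultrafilter_extends_filter_base)
  have "p \<in> K" if "K \<in> \<K>" for K
  proof (rule beta_closedD[OF closed[OF that] p(1)])
    show "\<Inter>K \<subseteq> p"
      using p(2) that by blast
  qed
  then show ?thesis
    by blast
qed

lemma Inter_meets_uprod_right_preimage:
  assumes ultra: "\<And>r. r \<in> K \<Longrightarrow> is_ultrafilter r" and e: "is_ultrafilter e" and p: "is_ultrafilter p"
    and common: "\<Inter>((\<lambda>q. uprod q e) ` K) \<subseteq> p" and "C \<in> \<Inter>K" "P \<in> p"
  shows "C \<inter> {x. linv x P \<in> e} \<noteq> {}"
proof
  assume disjoint: "C \<inter> {x. linv x P \<in> e} = {}"
  have "- P \<in> uprod r e" if "r \<in> K" for r
  proof -
    have "{x. linv x P \<in> e} \<notin> r"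
      using \<open>C \<in> \<Inter>K\<close> disjoint ultrafilter_disjoint[OF ultra[OF that]] that by blast
    then show ?thesis
      using ultrafilter_Compl_iff[OF ultrafilter_uprod[OF ultra[OF that] e]] by (simp add: mem_uprod)
  qed
  then have "- P \<in> p"
    using common by blast
  then show False
    using \<open>P \<in> p\<close> p ultrafilter_Compl_iff by blast
qed

lemma beta_closed_image_uprod_right:
  assumes K: "beta_closed K" and e: "is_ultrafilter e"
  shows "beta_closed ((\<lambda>q. uprod q e) ` K)"
proof (rule beta_closedI)
  show "is_ultrafilter r" if "r \<in> (\<lambda>q. uprod q e) ` K" for r
    using that beta_closed_ultrafilter[OF K] ultrafilter_uprod[OF _ e] by blast
next
  fix p assume p: "is_ultrafilter p" and common: "\<Inter>((\<lambda>q. uprod q e) ` K) \<subseteq> p"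
  have ultra: "\<And>r. r \<in> K \<Longrightarrow> is_ultrafilter r"
    using K by (rule beta_closed_ultrafilter)
  define D where "D P = {x. linv x P \<in> e}" for P
  have K_ne: "\<Inter>K \<noteq> {}"
    using Inter_ultrafilters(1)[OF ultra] by blast
  have K_Int: "A \<inter> B \<in> \<Inter>K" if "A \<in> \<Inter>K" "B \<in> \<Inter>K" for A B
    using Inter_ultrafilters(2)[OF ultra that] .
  have Dp_ne: "D ` p \<noteq> {}"
    using ultrafilter_UNIV[OF p] by blast
  have Dp_Int: "A \<inter> B \<in> D ` p" if AB: "A \<in> D ` p" "B \<in> D ` p" for A B
  proof -
    obtain P Q where "P \<in> p" "Q \<in> p" "A = D P" "B = D Q"
      using AB by blast
    moreover from this have "P \<inter> Q \<in> p" "D (P \<inter> Q) = D P \<inter> D Q"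
      using p e by (auto simp: D_def linv_Int ultrafilter_Int_iff)
    ultimately show ?thesis
      by blast
  qed
  have meets: "C \<inter> B \<noteq> {}" if "C \<in> \<Inter>K" "B \<in> D ` p" for C B
    using that Inter_meets_uprod_right_preimage[OF ultra e p common] unfolding D_def by blast
  \<comment> \<open>An ultrafilter containing \<open>\<Inter>K\<close> and all \<open>D P\<close>, \<open>P \<in> p\<close>, is a \<open>q \<in> K\<close> with \<open>q e = p\<close>.\<close>
  obtain q where q: "is_ultrafilter q" "\<Inter>K \<subseteq> q" "D ` p \<subseteq> q"
    by (rule ultrafilter_extends_meeting_families[OF K_ne K_Int Dp_ne Dp_Int meets])
  have "p \<subseteq> uprod q e"
  proof
    fix P assume "P \<in> p"
    then have "D P \<in> q"
      using q(3) by blast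
    then show "P \<in> uprod q e"
      by (simp add: mem_uprod D_def)
  qed
  then have "p = uprod q e"
    using ultrafilter_subset_eq[OF p ultrafilter_uprod[OF q(1) e]] by simp
  moreover have "q \<in> K"
    using beta_closedD[OF K q(1,2)] .
  ultimately show "p \<in> (\<lambda>q. uprod q e) ` K"
    by blast
qed

lemma beta_closed_right_fixed:
  assumes K: "beta_closed K" and e: "is_ultrafilter e"
  shows "beta_closed {q \<in> K. uprod q e = e}"
proof (rule beta_closedI)
  show "is_ultrafilter r" if "r \<in> {q \<in> K. uprod q e = e}" for r
    using that beta_closed_ultrafilter[OF K] by blast
next
  fix p assume p: "is_ultrafilter p" and common: "\<Inter>{q \<in> K. uprod q e = e} \<subseteq> p"
  have "\<Inter>K \<subseteq> \<Inter>{q \<in> K. uprod q e = e}"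
    by (rule Inter_anti_mono) blast
  then have "p \<in> K"
    using beta_closedD[OF K p] common by blast
  moreover have "e \<subseteq> uprod p e"
  proof
    fix P assume "P \<in> e"
    then have "{x. linv x P \<in> e} \<in> \<Inter>{q \<in> K. uprod q e = e}"
      by (auto simp: mem_uprod[symmetric])
    then show "P \<in> uprod p e"
      using common by (simp add: mem_uprod subsetD)
  qed
  then have "uprod p e = e"
    using ultrafilter_subset_eq[OF e ultrafilter_uprod[OF p e]] by simp
  ultimately show "p \<in> {q \<in> K. uprod q e = e}"
    by blast
qed

section \<open>Idempotents and minimal left ideals\<close>

lemma subset_Zorn_minimal:
  assumes "\<S> \<noteq> {}"
    and chain: "\<And>\<C>. \<C> \<noteq> {} \<Longrightarrow> \<C> \<subseteq> \<S> \<Longrightarrow> (\<And>X Y. X \<in> \<C> \<Longrightarrow> Y \<in> \<C> \<Longrightarrow> X \<subseteq> Y \<or> Y \<subseteq> X) \<Longrightarrow> \<Inter>\<C> \<in> \<S>"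
  obtains M where "M \<in> \<S>" "\<And>X. X \<in> \<S> \<Longrightarrow> X \<subseteq> M \<Longrightarrow> X = M"
proof -
  have "\<exists>M\<in>\<S>. \<forall>X\<in>\<S>. X \<subseteq> M \<longrightarrow> X = M"
  proof (rule predicate_Zorn)
    show "partial_order_on \<S> (relation_of (\<lambda>X Y. Y \<subseteq> X) \<S>)"
      by (rule partial_order_on_relation_ofI) auto
  next
    fix \<C> assume "\<C> \<in> Chains (relation_of (\<lambda>X Y. Y \<subseteq> X) \<S>)"
    then have "\<C> \<subseteq> \<S>" and comparable: "\<And>X Y. X \<in> \<C> \<Longrightarrow> Y \<in> \<C> \<Longrightarrow> X \<subseteq> Y \<or> Y \<subseteq> X"
      unfolding Chains_def relation_of_def by auto
    show "\<exists>U\<in>\<S>. \<forall>X\<in>\<C>. U \<subseteq> X"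
    proof (cases "\<C> = {}")
      case True
      then show ?thesis
        using \<open>\<S> \<noteq> {}\<close> by blast
    next
      case False
      then have "\<Inter>\<C> \<in> \<S>"
        using chain \<open>\<C> \<subseteq> \<S>\<close> comparable by blast
      then show ?thesis
        by blast
    qed
  qed
  then show thesis
    using that by blast
qed

definition closed_subsemigroup :: "'s::semigroup_mult set set set \<Rightarrow> bool" where
  "closed_subsemigroup K \<longleftrightarrow> subsemigroup K \<and> beta_closed K"

lemma closed_subsemigroup_minimal:
  assumes "closed_subsemigroup K"
  obtains M where "M \<subseteq> K" "closed_subsemigroup M" "\<forall>A. A \<subseteq> M \<longrightarrow> closed_subsemigroup A \<longrightarrow> A = M"
proof -
  let ?\<S> = "{A. A \<subseteq> K \<and> closed_subsemigroup A}"
  obtain M where "M \<in> ?\<S>" and minimal: "\<And>A. A \<in> ?\<S> \<Longrightarrow> A \<subseteq> M \<Longrightarrow> A = M"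
  proof (rule subset_Zorn_minimal)
    show "?\<S> \<noteq> {}"
      using assms by blast
  next
    fix \<C> assume "\<C> \<noteq> {}" "\<C> \<subseteq> ?\<S>" and comparable: "\<And>X Y. X \<in> \<C> \<Longrightarrow> Y \<in> \<C> \<Longrightarrow> X \<subseteq> Y \<or> Y \<subseteq> X"
    then have \<C>: "\<And>A. A \<in> \<C> \<Longrightarrow> A \<subseteq> K \<and> A \<noteq> {} \<and> beta_closed A \<and> (\<forall>p\<in>A. \<forall>q\<in>A. uprod p q \<in> A)"
      unfolding closed_subsemigroup_def subsemigroup_def by blast
    have "\<Inter>\<C> \<noteq> {}"
      by (rule beta_closed_chain_Inter_nonempty[OF \<open>\<C> \<noteq> {}\<close> _ _ comparable]) (simp_all add: \<C>)
    moreover have "beta_closed (\<Inter>\<C>)"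
      by (rule beta_closed_Inter[OF \<open>\<C> \<noteq> {}\<close>]) (simp add: \<C>)
    moreover have "\<forall>p\<in>\<Inter>\<C>. \<forall>q\<in>\<Inter>\<C>. uprod p q \<in> \<Inter>\<C>"
      using \<C> by blast
    moreover have "\<Inter>\<C> \<subseteq> K"
      using \<C> \<open>\<C> \<noteq> {}\<close> by blast
    ultimately show "\<Inter>\<C> \<in> ?\<S>"
      unfolding closed_subsemigroup_def subsemigroup_def by blast
  qed (rule that)
  then have "M \<subseteq> K" "closed_subsemigroup M"
    by simp_all
  moreover have "\<forall>A. A \<subseteq> M \<longrightarrow> closed_subsemigroup A \<longrightarrow> A = M"
  proof (intro allI impI)
    fix A assume "A \<subseteq> M" "closed_subsemigroup A"
    then show "A = M"
      using \<open>M \<subseteq> K\<close> by (intro minimal) auto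
  qed
  ultimately show thesis
    by (rule that)
qed

text \<open>Ellis-Numakura: a minimal closed subsemigroup \<open>M\<close> equals \<open>M e\<close> and \<open>{q \<in> M. q e = e}\<close>.\<close>
lemma minimal_closed_subsemigroup_idempotent:
  assumes M: "closed_subsemigroup M" and minimal: "\<And>A. A \<subseteq> M \<Longrightarrow> closed_subsemigroup A \<Longrightarrow> A = M"
    and e: "e \<in> M"
  shows "uprod e e = e"
proof -
  have M_closed: "beta_closed M" and M_mult: "\<And>p q. p \<in> M \<Longrightarrow> q \<in> M \<Longrightarrow> uprod p q \<in> M"
    using M unfolding closed_subsemigroup_def subsemigroup_def by blast+
  have e_ultra: "is_ultrafilter e"
    using M_closed e by (rule beta_closed_ultrafilter)
  let ?Me = "(\<lambda>q. uprod q e) ` M"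
  have "?Me \<subseteq> M"
    using M_mult e by blast
  moreover have "closed_subsemigroup ?Me"
    unfolding closed_subsemigroup_def subsemigroup_def
  proof (intro conjI ballI)
    show "?Me \<noteq> {}"
      using e by blast
    show "beta_closed ?Me"
      using M_closed e_ultra by (rule beta_closed_image_uprod_right)
    fix p q assume "p \<in> ?Me" "q \<in> ?Me"
    then obtain p' q' where "p' \<in> M" "q' \<in> M" "p = uprod p' e" "q = uprod q' e"
      by blast
    then show "uprod p q \<in> ?Me"
      using M_mult e by (metis image_eqI uprod_assoc)
  qed
  ultimately have "?Me = M"
    by (rule minimal)
  let ?Fix = "{q \<in> M. uprod q e = e}"
  have "closed_subsemigroup ?Fix"
    unfolding closed_subsemigroup_def subsemigroup_def
  proof (intro conjI ballI)
    from e \<open>?Me = M\<close> obtain q where "q \<in> M" "uprod q e = e"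
      by (metis imageE)
    then show "?Fix \<noteq> {}"
      by blast
    show "beta_closed ?Fix"
      using M_closed e_ultra by (rule beta_closed_right_fixed)
    fix p q assume "p \<in> ?Fix" "q \<in> ?Fix"
    then show "uprod p q \<in> ?Fix"
      using M_mult by (simp add: uprod_assoc)
  qed
  then have "?Fix = M"
    by (intro minimal) auto
  then show ?thesis
    using e by blast
qed

lemma closed_subsemigroup_idempotent:
  assumes "closed_subsemigroup K"
  obtains e where "e \<in> K" "uprod e e = e"
proof -
  obtain M where M: "M \<subseteq> K" "closed_subsemigroup M"
    and minimal: "\<forall>A. A \<subseteq> M \<longrightarrow> closed_subsemigroup A \<longrightarrow> A = M"
    using closed_subsemigroup_minimal[OF assms] by blast
  obtain e where e: "e \<in> M"
    using M(2) unfolding closed_subsemigroup_def subsemigroup_def by blast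
  have "uprod e e = e"
    using M(2) minimal[rule_format] e by (rule minimal_closed_subsemigroup_idempotent)
  with e M(1) show thesis
    using that by blast
qed

lemma minimal_left_ideal_right_translate:
  assumes L: "minimal_left_ideal M L" and v: "v \<in> L"
  shows "(\<lambda>q. uprod q v) ` L = L"
proof -
  have "L \<subseteq> M" and ideal: "\<And>q p. q \<in> M \<Longrightarrow> p \<in> L \<Longrightarrow> uprod q p \<in> L"
    using L unfolding minimal_left_ideal_def left_ideal_def by blast+
  have sub: "(\<lambda>q. uprod q v) ` L \<subseteq> L"
    using ideal v \<open>L \<subseteq> M\<close> by blast
  have "left_ideal M ((\<lambda>q. uprod q v) ` L)"
    unfolding left_ideal_def
  proof (intro conjI ballI)
    show "(\<lambda>q. uprod q v) ` L \<noteq> {}"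
      using v by blast
    show "(\<lambda>q. uprod q v) ` L \<subseteq> M"
      using sub \<open>L \<subseteq> M\<close> by blast
    fix q p assume q: "q \<in> M" and "p \<in> (\<lambda>q. uprod q v) ` L"
    then obtain r where r: "r \<in> L" "p = uprod r v"
      by blast
    then have "uprod q p = uprod (uprod q r) v"
      by (simp add: uprod_assoc)
    moreover have "uprod q r \<in> L"
      using ideal[OF q r(1)] .
    ultimately show "uprod q p \<in> (\<lambda>q. uprod q v) ` L"
      by blast
  qed
  then show ?thesis
    using L sub unfolding minimal_left_ideal_def by blast
qed

lemma minimal_left_ideal_principal:
  assumes L: "minimal_left_ideal M L" and v: "v \<in> L"
  shows "(\<lambda>q. uprod q v) ` M = L"
proof
  show "(\<lambda>q. uprod q v) ` M \<subseteq> L"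
    using L v unfolding minimal_left_ideal_def left_ideal_def by blast
  have "L \<subseteq> M"
    using L unfolding minimal_left_ideal_def left_ideal_def by blast
  then have "(\<lambda>q. uprod q v) ` L \<subseteq> (\<lambda>q. uprod q v) ` M"
    by (rule image_mono)
  then show "L \<subseteq> (\<lambda>q. uprod q v) ` M"
    unfolding minimal_left_ideal_right_translate[OF L v] .
qed

lemma minimal_left_ideal_ultrafilter:
  "beta_closed M \<Longrightarrow> minimal_left_ideal M L \<Longrightarrow> u \<in> L \<Longrightarrow> is_ultrafilter u"
  unfolding minimal_left_ideal_def left_ideal_def by (meson beta_closed_ultrafilter subsetD)

lemma minimal_left_ideal_idempotent_left_unit:
  assumes M: "beta_closed M" and L: "minimal_left_ideal M L" and u: "u \<in> L"
  obtains e where "e \<in> L" "uprod e e = e" "uprod e u = u"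
proof -
  have u_ultra: "is_ultrafilter u"
    using M L u by (rule minimal_left_ideal_ultrafilter)
  have L_closed: "beta_closed L"
    using beta_closed_image_uprod_right[OF M u_ultra] minimal_left_ideal_principal[OF L u] by simp
  have "L \<subseteq> M" and ideal: "\<And>q p. q \<in> M \<Longrightarrow> p \<in> L \<Longrightarrow> uprod q p \<in> L"
    using L unfolding minimal_left_ideal_def left_ideal_def by blast+
  let ?Fix = "{q \<in> L. uprod q u = u}"
  have "closed_subsemigroup ?Fix"
    unfolding closed_subsemigroup_def subsemigroup_def
  proof (intro conjI ballI)
    have "u \<in> (\<lambda>q. uprod q u) ` L"
      using minimal_left_ideal_right_translate[OF L u] u by simp
    then show "?Fix \<noteq> {}"
      by blast
    show "beta_closed ?Fix"
      using L_closed u_ultra by (rule beta_closed_right_fixed)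
    fix p q assume "p \<in> ?Fix" "q \<in> ?Fix"
    then show "uprod p q \<in> ?Fix"
      using ideal \<open>L \<subseteq> M\<close> by (auto simp: uprod_assoc)
  qed
  then obtain e where "e \<in> ?Fix" "uprod e e = e"
    by (rule closed_subsemigroup_idempotent)
  then show thesis
    using that by blast
qed

section \<open>The action of \<open>betaS\<close>\<close>

definition is_plim :: "'s set set \<Rightarrow> ('s \<Rightarrow> 'x::topological_space) \<Rightarrow> 'x \<Rightarrow> bool" where
  "is_plim p f y \<longleftrightarrow> (\<forall>U. open U \<and> y \<in> U \<longrightarrow> {s. f s \<in> U} \<in> p)"

lemma is_plim_unique:
  fixes f :: "'s \<Rightarrow> 'x::t2_space"
  assumes p: "is_ultrafilter p" and "is_plim p f y\<^sub>1" "is_plim p f y\<^sub>2"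
  shows "y\<^sub>1 = y\<^sub>2"
proof (rule ccontr)
  assume "y\<^sub>1 \<noteq> y\<^sub>2"
  then obtain U\<^sub>1 U\<^sub>2 where U: "open U\<^sub>1" "open U\<^sub>2" "y\<^sub>1 \<in> U\<^sub>1" "y\<^sub>2 \<in> U\<^sub>2" "U\<^sub>1 \<inter> U\<^sub>2 = {}"
    by (metis hausdorff)
  then have "{s. f s \<in> U\<^sub>1} \<in> p" "{s. f s \<in> U\<^sub>2} \<in> p"
    using assms(2,3) unfolding is_plim_def by blast+
  moreover have "{s. f s \<in> U\<^sub>1} \<inter> {s. f s \<in> U\<^sub>2} = {}"
    using U(5) by blast
  ultimately show False
    using ultrafilter_disjoint[OF p] by blast
qed

lemma is_plim_exists:
  fixes f :: "'s \<Rightarrow> 'x::topological_space"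
  assumes compact: "compact (UNIV :: 'x set)" and p: "is_ultrafilter p"
  shows "\<exists>y. is_plim p f y"
proof (rule ccontr)
  assume "\<nexists>y. is_plim p f y"
  then obtain V where V: "\<And>y. open (V y)" "\<And>y. y \<in> V y" "\<And>y. {s. f s \<in> V y} \<notin> p"
    unfolding is_plim_def by metis
  have "UNIV \<subseteq> (\<Union>y\<in>UNIV. V y)"
    using V(2) by blast
  then obtain C where "finite C" "UNIV \<subseteq> (\<Union>y\<in>C. V y)"
    using compactE_image[OF compact, of UNIV V] V(1) by metis
  then have "(\<Union>y\<in>C. {s. f s \<in> V y}) = UNIV"
    by blast
  then have "(\<Union>y\<in>C. {s. f s \<in> V y}) \<in> p"
    using ultrafilter_UNIV[OF p] by simp
  then show False
    using ultrafilter_finite_UN[OF \<open>finite C\<close> p] V(3) by blast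
qed

lemma Tp_eq_iff:
  fixes T :: "'s \<Rightarrow> 'x::t2_space \<Rightarrow> 'x"
  assumes compact: "compact (UNIV :: 'x set)" and p: "is_ultrafilter p"
  shows "Tp T p x = y \<longleftrightarrow> is_plim p (\<lambda>s. T s x) y"
proof -
  obtain y\<^sub>0 where y\<^sub>0: "is_plim p (\<lambda>s. T s x) y\<^sub>0"
    using is_plim_exists[OF compact p] by blast
  have "\<exists>!y. is_plim p (\<lambda>s. T s x) y"
    using y\<^sub>0 is_plim_unique[OF p] by blast
  then have "is_plim p (\<lambda>s. T s x) (Tp T p x)"
    unfolding Tp_def is_plim_def[symmetric] by (rule theI')
  then show ?thesis
    using is_plim_unique[OF p] by blast
qed

lemma Tp_uprod:
  fixes T :: "'s::semigroup_mult \<Rightarrow> 'x::t2_space \<Rightarrow> 'x"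
  assumes T: "dyn_system T" and p: "is_ultrafilter p" and q: "is_ultrafilter q"
  shows "Tp T p (Tp T q x) = Tp T (uprod p q) x"
proof -
  have compact: "compact (UNIV :: 'x set)" and cont: "\<And>t. continuous_on UNIV (T t)"
    and comp: "\<And>t s. T t (T s x) = T (t * s) x"
    using T unfolding dyn_system_def by (simp_all add: comp_def fun_eq_iff)
  define z where "z = Tp T q x"
  have lim_z: "open V \<and> z \<in> V \<Longrightarrow> {s. T s x \<in> V} \<in> q" for V
    using Tp_eq_iff[OF compact q, of T x z] unfolding z_def is_plim_def by simp
  have "Tp T (uprod p q) x = Tp T p z"
    unfolding Tp_eq_iff[OF compact ultrafilter_uprod[OF p q]] is_plim_def
  proof (intro allI impI)
    fix U :: "'x set" assume U: "open U \<and> Tp T p z \<in> U"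
    have "{t. T t z \<in> U} \<subseteq> {t. linv t {s. T s x \<in> U} \<in> q}"
    proof
      fix t assume "t \<in> {t. T t z \<in> U}"
      then have "open (T t -` U) \<and> z \<in> T t -` U"
        using U open_vimage[OF _ cont] by simp
      then have "{s. T s x \<in> T t -` U} \<in> q"
        by (rule lim_z)
      moreover have "{s. T s x \<in> T t -` U} = linv t {s. T s x \<in> U}"
        by (simp add: linv_def comp)
      ultimately show "t \<in> {t. linv t {s. T s x \<in> U} \<in> q}"
        by simp
    qed
    moreover have "{t. T t z \<in> U} \<in> p"
      using U Tp_eq_iff[OF compact p, of T z] unfolding is_plim_def by blast
    ultimately show "{s. T s x \<in> U} \<in> uprod p q"
      unfolding mem_uprod using ultrafilter_mono[OF p] by blast
  qed
  then show ?thesis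
    unfolding z_def by simp
qed

section \<open>Uniform recurrence\<close>

lemma Fbar_extends_meeting_family:
  assumes "\<G> \<noteq> {}" and "\<And>A B. A \<in> \<G> \<Longrightarrow> B \<in> \<G> \<Longrightarrow> A \<inter> B \<in> \<G>"
    and "\<And>C B. eventually (\<lambda>s. s \<in> C) F \<Longrightarrow> B \<in> \<G> \<Longrightarrow> C \<inter> B \<noteq> {}"
  obtains q where "q \<in> Fbar F" "\<G> \<subseteq> q"
proof -
  let ?P = "{C. eventually (\<lambda>s. s \<in> C) F}"
  have "UNIV \<in> ?P"
    by simp
  then have P_ne: "?P \<noteq> {}"
    by blast
  have P_Int: "A \<inter> B \<in> ?P" if "A \<in> ?P" "B \<in> ?P" for A B
    using that by (simp add: eventually_conj)
  have P_meets: "C \<inter> B \<noteq> {}" if "C \<in> ?P" "B \<in> \<G>" for C B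
    using that assms(3) by simp
  obtain q where "is_ultrafilter q" "?P \<subseteq> q" "\<G> \<subseteq> q"
    by (rule ultrafilter_extends_meeting_families[OF P_ne P_Int assms(1,2) P_meets])
  moreover from this have "q \<in> Fbar F"
    by (intro FbarI) blast+
  ultimately show thesis
    using that by blast
qed

lemma Fbar_avoiding_linv:
  assumes not_covered: "\<nexists>G. finite G \<and> G \<subseteq> B \<and> eventually (\<lambda>s. s \<in> (\<Union>t\<in>G. linv t A)) F"
  obtains p where "p \<in> Fbar F" "\<forall>t\<in>B. linv t A \<notin> p"
proof -
  let ?\<G> = "{- (\<Union>t\<in>G. linv t A) | G. finite G \<and> G \<subseteq> B}"
  obtain p where p: "p \<in> Fbar F" "?\<G> \<subseteq> p"
  proof (rule Fbar_extends_meeting_family)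
    have "- (\<Union>t\<in>{}. linv t A) \<in> ?\<G>"
      using finite.emptyI by blast
    then show "?\<G> \<noteq> {}"
      by blast
  next
    fix X Y assume "X \<in> ?\<G>" "Y \<in> ?\<G>"
    then obtain G G' where "X = - (\<Union>t\<in>G. linv t A)" "Y = - (\<Union>t\<in>G'. linv t A)"
      "finite G" "G \<subseteq> B" "finite G'" "G' \<subseteq> B"
      by blast
    moreover from this have "X \<inter> Y = - (\<Union>t\<in>G \<union> G'. linv t A)" "finite (G \<union> G')" "G \<union> G' \<subseteq> B"
      by auto
    ultimately show "X \<inter> Y \<in> ?\<G>"
      by blast
  next
    fix C X assume C: "eventually (\<lambda>s. s \<in> C) F" and "X \<in> ?\<G>"
    then obtain G where G: "finite G" "G \<subseteq> B" and X: "X = - (\<Union>t\<in>G. linv t A)"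
      by blast
    show "C \<inter> X \<noteq> {}"
    proof
      assume "C \<inter> X = {}"
      then have C_sub: "C \<subseteq> (\<Union>t\<in>G. linv t A)"
        unfolding X by blast
      have "eventually (\<lambda>s. s \<in> (\<Union>t\<in>G. linv t A)) F"
        using C by (rule eventually_mono) (use C_sub in blast)
      with G show False
        using not_covered by blast
    qed
  qed (rule that)
  moreover have "\<forall>t\<in>B. linv t A \<notin> p"
  proof
    fix t assume "t \<in> B"
    moreover have "finite {t}"
      by simp
    ultimately have "- (\<Union>t\<in>{t}. linv t A) \<in> ?\<G>"
      by blast
    then have "- linv t A \<in> p"
      using p(2) by auto
    then show "linv t A \<notin> p"
      using ultrafilter_Compl_iff[OF Fbar_ultrafilter[OF p(1)]] by blast
  qed
  ultimately show thesis
    using that by blast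
qed

lemma F_syndetic_iff_ultrafilters:
  "F_syndetic F A \<longleftrightarrow> (\<forall>B. eventually (\<lambda>s. s \<in> B) F \<longrightarrow> (\<forall>p\<in>Fbar F. \<exists>t\<in>B. linv t A \<in> p))"
proof (intro iffI allI impI ballI)
  fix B p assume "F_syndetic F A" "eventually (\<lambda>s. s \<in> B) F" and p: "p \<in> Fbar F"
  then obtain G where G: "finite G" "G \<subseteq> B" "eventually (\<lambda>s. s \<in> (\<Union>t\<in>G. linv t A)) F"
    unfolding F_syndetic_def by blast
  have "(\<Union>t\<in>G. linv t A) \<in> p"
    using FbarD[OF p G(3)] .
  then show "\<exists>t\<in>B. linv t A \<in> p"
    using ultrafilter_finite_UN[OF G(1) Fbar_ultrafilter[OF p]] G(2) by blast
next
  assume meets: "\<forall>B. eventually (\<lambda>s. s \<in> B) F \<longrightarrow> (\<forall>p\<in>Fbar F. \<exists>t\<in>B. linv t A \<in> p)"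
  show "F_syndetic F A"
    unfolding F_syndetic_def
  proof (intro allI impI, rule ccontr)
    fix B assume B: "eventually (\<lambda>s. s \<in> B) F"
      and not_covered: "\<nexists>G. finite G \<and> G \<subseteq> B \<and> eventually (\<lambda>s. s \<in> (\<Union>t\<in>G. linv t A)) F"
    obtain p where "p \<in> Fbar F" "\<forall>t\<in>B. linv t A \<notin> p"
      using Fbar_avoiding_linv[OF not_covered] .
    with meets B show False
      by blast
  qed
qed

lemma Fbar_uprod_fixes_point:
  fixes T :: "'s::semigroup_mult \<Rightarrow> 'x::t2_space \<Rightarrow> 'x"
  assumes compact: "compact (UNIV :: 'x set)" and v: "is_ultrafilter v"
    and meets: "\<And>B U. eventually (\<lambda>s. s \<in> B) F \<Longrightarrow> open U \<Longrightarrow> x \<in> U \<Longrightarrow> \<exists>t\<in>B. linv t {s. T s x \<in> U} \<in> v"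
  obtains q where "q \<in> Fbar F" "Tp T (uprod q v) x = x"
proof -
  define R where "R U = {t. linv t {s. T s x \<in> U} \<in> v}" for U
  have R_Int: "R (U \<inter> U') = R U \<inter> R U'" for U U'
  proof -
    have "{s. T s x \<in> U \<inter> U'} = {s. T s x \<in> U} \<inter> {s. T s x \<in> U'}"
      by blast
    then show ?thesis
      unfolding R_def by (auto simp: linv_Int ultrafilter_Int_iff[OF v])
  qed
  let ?\<G> = "R ` {U. open U \<and> x \<in> U}"
  obtain q where q: "q \<in> Fbar F" "?\<G> \<subseteq> q"
  proof (rule Fbar_extends_meeting_family)
    show "?\<G> \<noteq> {}"
      using open_UNIV by blast
    show "X \<inter> Y \<in> ?\<G>" if XY: "X \<in> ?\<G>" "Y \<in> ?\<G>" for X Y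
    proof -
      obtain U U' where "X = R U" "Y = R U'" "open U" "open U'" "x \<in> U" "x \<in> U'"
        using XY by blast
      then show ?thesis
        using R_Int[of U U'] open_Int[of U U'] by blast
    qed
    show "C \<inter> X \<noteq> {}" if C: "eventually (\<lambda>s. s \<in> C) F" and X: "X \<in> ?\<G>" for C X
    proof -
      obtain U where "X = R U" "open U" "x \<in> U"
        using X by blast
      with meets[OF C] show ?thesis
        unfolding R_def by blast
    qed
  qed (rule that)
  moreover have "Tp T (uprod q v) x = x"
    unfolding Tp_eq_iff[OF compact ultrafilter_uprod[OF Fbar_ultrafilter[OF q(1)] v]] is_plim_def
  proof (intro allI impI)
    fix U :: "'x set" assume "open U \<and> x \<in> U"
    then have "R U \<in> q"
      using q(2) by blast
    then show "{s. T s x \<in> U} \<in> uprod q v"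
      by (simp add: mem_uprod R_def)
  qed
  ultimately show thesis
    using that by blast
qed

lemma unif_recurrent_imp_fixed_in_minimal_left_ideal:
  fixes T :: "'s::semigroup_mult \<Rightarrow> 'x::t2_space \<Rightarrow> 'x"
  assumes T: "dyn_system T" and L: "minimal_left_ideal (Fbar F) L" and recurrent: "F_unif_recurrent F T x"
  obtains u where "u \<in> L" "Tp T u x = x"
proof -
  have compact: "compact (UNIV :: 'x set)"
    using T unfolding dyn_system_def by blast
  obtain v where v: "v \<in> L"
    using L unfolding minimal_left_ideal_def left_ideal_def by blast
  have v_Fbar: "v \<in> Fbar F"
    using L v unfolding minimal_left_ideal_def left_ideal_def by blast
  have meets: "\<exists>t\<in>B. linv t {s. T s x \<in> U} \<in> v" if "eventually (\<lambda>s. s \<in> B) F" "open U" "x \<in> U" for B U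
    using recurrent that v_Fbar unfolding F_unif_recurrent_def F_syndetic_iff_ultrafilters by blast
  obtain q where "q \<in> Fbar F" "Tp T (uprod q v) x = x"
    using Fbar_uprod_fixes_point[where F = F and T = T and x = x, OF compact Fbar_ultrafilter[OF v_Fbar] meets] .
  moreover from this have "uprod q v \<in> L"
    using L v unfolding minimal_left_ideal_def left_ideal_def by blast
  ultimately show thesis
    using that by blast
qed

lemma fixed_in_minimal_left_ideal_imp_unif_recurrent:
  fixes T :: "'s::semigroup_mult \<Rightarrow> 'x::t2_space \<Rightarrow> 'x"
  assumes T: "dyn_system T" and L: "minimal_left_ideal (Fbar F) L" and u: "u \<in> L" and fixed: "Tp T u x = x"
  shows "F_unif_recurrent F T x"
  unfolding F_unif_recurrent_def F_syndetic_iff_ultrafilters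
proof (intro allI impI ballI)
  fix U B p assume U: "open U \<and> x \<in> U" and B: "eventually (\<lambda>s. s \<in> B) F" and p: "p \<in> Fbar F"
  have compact: "compact (UNIV :: 'x set)"
    using T unfolding dyn_system_def by blast
  have ultra: "is_ultrafilter r" if "r \<in> Fbar F" for r
    using that by (rule Fbar_ultrafilter)
  have u_Fbar: "u \<in> Fbar F"
    using L u unfolding minimal_left_ideal_def left_ideal_def by blast
  have "uprod p u \<in> L"
    using L p u unfolding minimal_left_ideal_def left_ideal_def by blast
  then obtain q where q: "q \<in> Fbar F" "uprod q (uprod p u) = u"
    using minimal_left_ideal_principal[OF L] u by (metis imageE)
  have "Tp T (uprod q p) x = Tp T (uprod q p) (Tp T u x)"
    by (simp add: fixed)
  also have "\<dots> = Tp T u x"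
    using Tp_uprod[OF T ultrafilter_uprod[OF ultra ultra] ultra] q p u_Fbar by (simp add: uprod_assoc)
  finally have "Tp T (uprod q p) x = x"
    by (simp add: fixed)
  then have "is_plim (uprod q p) (\<lambda>s. T s x) x"
    unfolding Tp_eq_iff[OF compact ultrafilter_uprod[OF ultra[OF q(1)] ultra[OF p]]] .
  then have "{t. linv t {s. T s x \<in> U} \<in> p} \<in> q"
    using U unfolding is_plim_def mem_uprod by blast
  then have "{t. linv t {s. T s x \<in> U} \<in> p} \<inter> B \<noteq> {}"
    using ultrafilter_disjoint[OF ultra[OF q(1)]] FbarD[OF q(1) B] by blast
  then show "\<exists>t\<in>B. linv t {s. T s x \<in> U} \<in> p"
    by blast
qed

theorem theorem11:
  fixes F :: "'s::semigroup_mult filter"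
    and T :: "'s \<Rightarrow> 'x::t2_space \<Rightarrow> 'x"
    and L :: "'s set set set"
    and x :: 'x
  assumes "subsemigroup (Fbar F)"
    and "dyn_system T"
    and "minimal_left_ideal (Fbar F) L"
  shows "(F_unif_recurrent F T x \<longleftrightarrow> (\<exists>u\<in>L. Tp T u x = x))
       \<and> (F_unif_recurrent F T x \<longleftrightarrow> (\<exists>y u. u \<in> L \<and> uprod u u = u \<and> Tp T u y = x))
       \<and> (F_unif_recurrent F T x \<longleftrightarrow> (\<exists>u\<in>L. uprod u u = u \<and> Tp T u x = x))"
proof -
  note T = assms(2) and L = assms(3)
  have ultra: "is_ultrafilter u" if "u \<in> L" for u
    using beta_closed_Fbar L that by (rule minimal_left_ideal_ultrafilter)
  have a_iff_b: "F_unif_recurrent F T x \<longleftrightarrow> (\<exists>u\<in>L. Tp T u x = x)"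
    using unif_recurrent_imp_fixed_in_minimal_left_ideal[OF T L]
      fixed_in_minimal_left_ideal_imp_unif_recurrent[OF T L] by metis
  have b_imp_d: "\<exists>e\<in>L. uprod e e = e \<and> Tp T e x = x" if "u \<in> L" "Tp T u x = x" for u
  proof -
    obtain e where e: "e \<in> L" "uprod e e = e" "uprod e u = u"
      using minimal_left_ideal_idempotent_left_unit[OF beta_closed_Fbar L \<open>u \<in> L\<close>] .
    then have "Tp T e x = x"
      using Tp_uprod[OF T ultra ultra, of e u x] that by simp
    with e show ?thesis
      by blast
  qed
  have c_imp_b: "Tp T u x = x" if "u \<in> L" "uprod u u = u" "Tp T u y = x" for u y
    using Tp_uprod[OF T ultra ultra, of u u y] that by simp
  show ?thesis
    using a_iff_b b_imp_d c_imp_b by blast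
qed

end
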